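(* Let $n\ge 1$, $N\ge 1$ be integers, $p\in(0,1)$, and let $I:\{0,1\}^n\to\{0,1\}$ be a decoding-error indicator with error-correcting capability $t$ (an integer $0\le t<n$ such that $I(\mathbf z)=0$ whenever $wt(\mathbf z)\le t$). For $q\in(0,1)$ let $\hat P_{IS}(e;q)=\frac1N\sum_{j=1}^N I(\mathbf z_j)W(wt(\mathbf z_j);p,q)$ with $\mathbf z_1,\dots,\mathbf z_N$ i.i.d. with pmf $f(\mathbf z;q)=q^{wt(\mathbf z)}(1-q)^{n-wt(\mathbf z)}$, and let $V(q)=\mathrm{var}_q[\hat P_{IS}(e;q)]$. Suppose $\sum_{i=t+1}^n P_p(e;i)>0$. Then the parameter $\hat q\in(0,1)$ that minimizes $V$ over $(0,1)$ satisfies $$\hat q=\frac1n\,\frac{\sum_{i=t+1}^{n} i\,W(i;p,\hat q)\,P_p(e;i)}{\sum_{i=t+1}^{n} W(i;p,\hat q)\,P_p(e;i)}.$$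
   Context: Setting: a linear block code of length $n$ is used over a binary symmetric channel (BSC) with cross-over probability $p$; w.l.o.g. the all-zero codeword is sent, so the channel output equals the error pattern $\mathbf z\in\{0,1\}^n$, whose bits are i.i.d. Bernoulli($p$). $wt(\mathbf z)$ is the number of ones in $\mathbf z$. $I(\mathbf z)=1$ if the decoder decodes $\mathbf z$ erroneously and $0$ otherwise; $t$ is the maximum number of errors the decoder always corrects. The weighting function is $W(i;p,q)=\frac{p^i(1-p)^{n-i}}{q^i(1-q)^{n-i}}$. $P_p(e;i)=\sum_{\mathbf z:\,wt(\mathbf z)=i} I(\mathbf z)\,p^i(1-p)^{n-i}$ is the joint probability that a decoding error occurs and the error pattern has weight $i$ on a BSC with parameter $p$. The word error rate is $P(e)=\sum_{\mathbf z}I(\mathbf z)p^{wt(\mathbf z)}(1-p)^{n-wt(\mathbf z)}$, and the variance is $V(q)=\frac1N\big(\mathbb E_q[I(\mathbf z)W^2(wt(\mathbf z);p,q)]-P(e)^2\big)$, where $\mathbb E_q$ is expectation under $f(\cdot;q)$. *)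

theory Defs
  imports Complex_Main
begin

text \<open>Error patterns in {0,1}^n are boolean lists of length n (True = 1).\<close>
definition patterns :: "nat \<Rightarrow> bool list set" where
  "patterns n = {z. length z = n}"

definition wt :: "bool list \<Rightarrow> nat" where
  "wt z = length (filter id z)"

definition W :: "nat \<Rightarrow> nat \<Rightarrow> real \<Rightarrow> real \<Rightarrow> real" where
  "W n i p q = (p ^ i * (1 - p) ^ (n - i)) / (q ^ i * (1 - q) ^ (n - i))"

definition f_pmf :: "nat \<Rightarrow> real \<Rightarrow> bool list \<Rightarrow> real" where
  "f_pmf n q z = q ^ wt z * (1 - q) ^ (n - wt z)"

text \<open>P_p(e;i): joint probability of decoding error and error weight i.
  The decoding-error indicator I is a predicate, I(z) = of_bool (err z).\<close>
definition Pe_i :: "nat \<Rightarrow> (bool list \<Rightarrow> bool) \<Rightarrow> real \<Rightarrow> nat \<Rightarrow> real" where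
  "Pe_i n err p i = (\<Sum>z\<in>{z\<in>patterns n. wt z = i}. of_bool (err z) * p ^ i * (1 - p) ^ (n - i))"

definition Perr :: "nat \<Rightarrow> (bool list \<Rightarrow> bool) \<Rightarrow> real \<Rightarrow> real" where
  "Perr n err p = (\<Sum>z\<in>patterns n. of_bool (err z) * f_pmf n p z)"

definition V :: "nat \<Rightarrow> nat \<Rightarrow> (bool list \<Rightarrow> bool) \<Rightarrow> real \<Rightarrow> real \<Rightarrow> real" where
  "V n N err p q = (1 / real N) *
     ((\<Sum>z\<in>patterns n. of_bool (err z) * (W n (wt z) p q)\<^sup>2 * f_pmf n q z) - (Perr n err p)\<^sup>2)"

end

theory Submission
  imports Defs
begin

text \<open>Grouping the error patterns by weight turns the second moment of the estimator into
  \<open>\<Sum>\<^sub>i W(i;p,q) P\<^sub>p(e;i)\<close>, and only the patterns of weight above \<open>t\<close> contribute. Since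
  \<open>d/dq W(i;p,q) = W(i;p,q) (n q - i) / (q (1 - q))\<close>, Fermat's rule at the interior minimiser
  \<open>q\<close> gives \<open>\<Sum>\<^sub>i W(i;p,q) P\<^sub>p(e;i) (n q - i) = 0\<close>, which is the fixed-point equation once one
  knows that \<open>\<Sum>\<^sub>i W(i;p,q) P\<^sub>p(e;i) > 0\<close>.\<close>

lemma finite_patterns: "finite (patterns n)"
proof -
  have "patterns n = {xs. set xs \<subseteq> UNIV \<and> length xs = n}"
    by (simp add: patterns_def)
  then show ?thesis
    using finite_lists_length_eq[of "UNIV :: bool set" n] by simp
qed

lemma wt_le_length: "wt z \<le> length z"
  by (simp add: wt_def)

lemma W_pos: "0 < p \<Longrightarrow> p < 1 \<Longrightarrow> 0 < q \<Longrightarrow> q < 1 \<Longrightarrow> 0 < W n i p q"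
  by (simp add: W_def)

lemma Pe_i_nonneg: "0 \<le> p \<Longrightarrow> p \<le> 1 \<Longrightarrow> 0 \<le> Pe_i n err p i"
  unfolding Pe_i_def by (intro sum_nonneg) simp

lemma Pe_i_eq_0:
  assumes "\<And>z. z \<in> patterns n \<Longrightarrow> wt z \<le> t \<Longrightarrow> \<not> err z" and "i \<le> t"
  shows "Pe_i n err p i = 0"
  unfolding Pe_i_def using assms by (intro sum.neutral) auto

lemma W_eq_exp:
  assumes "0 < q" "q < 1"
  shows "W n i p q = p ^ i * (1 - p) ^ (n - i) * exp (- (real i * ln q + real (n - i) * ln (1 - q)))"
proof -
  have "exp (real i * ln q) = q ^ i" "exp (real (n - i) * ln (1 - q)) = (1 - q) ^ (n - i)"
    using assms by (simp_all add: exp_of_nat_mult)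
  then have "exp (- (real i * ln q + real (n - i) * ln (1 - q))) = 1 / (q ^ i * (1 - q) ^ (n - i))"
    by (simp only: exp_minus exp_add) (simp add: divide_inverse)
  then show ?thesis
    by (simp add: W_def)
qed

lemma has_field_derivative_W:
  assumes "i \<le> n" "0 < q" "q < 1"
  shows "((\<lambda>q. W n i p q) has_field_derivative W n i p q * (real n * q - real i) / (q * (1 - q))) (at q)"
proof -
  define c where "c = p ^ i * (1 - p) ^ (n - i)"
  define e where "e x = exp (- (real i * ln x + real (n - i) * ln (1 - x)))" for x
  have W_ce: "W n i p x = c * e x" if "x \<in> {0<..<1}" for x
    using W_eq_exp[of x n i p] that unfolding c_def e_def by simp
  have "((\<lambda>x. - (real i * ln x + real (n - i) * ln (1 - x))) has_real_derivative
          real (n - i) / (1 - q) - real i / q) (at q)"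
    using assms(2,3) by (auto intro!: derivative_eq_intros simp: field_simps)
  then have "((\<lambda>x. c * e x) has_field_derivative c * e q * (real (n - i) / (1 - q) - real i / q)) (at q)"
    unfolding e_def mult.assoc by (intro DERIV_cmult DERIV_fun_exp)
  moreover have "real (n - i) / (1 - q) - real i / q = (real n * q - real i) / (q * (1 - q))"
  proof -
    have "q \<noteq> 0" "1 - q \<noteq> 0"
      using assms by auto
    then show ?thesis
      using assms(1) by (simp add: of_nat_diff field_simps)
  qed
  ultimately have "((\<lambda>x. c * e x) has_field_derivative W n i p q * (real n * q - real i) / (q * (1 - q))) (at q)"
    using W_ce[of q] assms(2,3) by simp
  then show ?thesis
    by (rule has_field_derivative_transform_within_open[where S = "{0<..<1}"])
      (use assms(2,3) W_ce in simp_all)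
qed

lemma second_moment_eq_sum_W_Pe_i:
  assumes "0 < q" "q < 1"
  shows "(\<Sum>z\<in>patterns n. of_bool (err z) * (W n (wt z) p q)\<^sup>2 * f_pmf n q z)
         = (\<Sum>i\<le>n. W n i p q * Pe_i n err p i)"
proof -
  let ?g = "\<lambda>z. of_bool (err z) * (W n (wt z) p q)\<^sup>2 * f_pmf n q z"
  have "(\<Sum>z\<in>patterns n. ?g z) = (\<Sum>i\<le>n. \<Sum>z\<in>{z\<in>patterns n. wt z = i}. ?g z)"
  proof (rule sum.group[symmetric])
    show "wt ` patterns n \<subseteq> {..n}"
      using wt_le_length by (auto simp: patterns_def)
  qed (simp_all add: finite_patterns)
  also have "\<dots> = (\<Sum>i\<le>n. W n i p q * Pe_i n err p i)"
  proof (intro sum.cong refl)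
    fix i
    have W_f: "W n i p q * (q ^ i * (1 - q) ^ (n - i)) = p ^ i * (1 - p) ^ (n - i)"
      using assms by (simp add: W_def)
    have "?g z = W n i p q * (of_bool (err z) * p ^ i * (1 - p) ^ (n - i))" if "wt z = i" for z
      using that W_f by (simp add: f_pmf_def power2_eq_square algebra_simps)
    then show "(\<Sum>z\<in>{z\<in>patterns n. wt z = i}. ?g z) = W n i p q * Pe_i n err p i"
      unfolding Pe_i_def sum_distrib_left by (intro sum.cong) auto
  qed
  finally show ?thesis .
qed

lemma V_eq_sum_W_Pe_i:
  assumes "0 < q" "q < 1"
    and "\<And>z. z \<in> patterns n \<Longrightarrow> wt z \<le> t \<Longrightarrow> \<not> err z"
  shows "V n N err p q = (1 / real N) * ((\<Sum>i=t+1..n. W n i p q * Pe_i n err p i) - (Perr n err p)\<^sup>2)"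
proof -
  have "(\<Sum>i\<le>n. W n i p q * Pe_i n err p i) = (\<Sum>i=t+1..n. W n i p q * Pe_i n err p i)"
    using Pe_i_eq_0[OF assms(3)] by (intro sum.mono_neutral_right) auto
  then show ?thesis
    using second_moment_eq_sum_W_Pe_i[OF assms(1,2)] by (simp add: V_def)
qed

lemma sum_W_pos:
  assumes "finite S" "0 < p" "p < 1" "0 < q" "q < 1"
    and "\<And>i. i \<in> S \<Longrightarrow> 0 \<le> c i" and "(\<Sum>i\<in>S. c i) > 0"
  shows "(\<Sum>i\<in>S. W n i p q * c i) > 0"
proof -
  obtain j where "j \<in> S" "0 < c j"
    using assms(7) sum_nonpos[of S c] by (meson not_le)
  moreover have "0 < W n i p q" for i
    using W_pos assms by simp
  ultimately show ?thesis
    using assms by (intro sum_pos2[where i = j]) (auto intro: mult_pos_pos mult_nonneg_nonneg less_imp_le)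
qed

lemma W_sum_stationary:
  assumes "\<And>i. i \<in> S \<Longrightarrow> i \<le> n" and "0 < qh" "qh < 1"
    and "\<And>q. 0 < q \<Longrightarrow> q < 1 \<Longrightarrow> (\<Sum>i\<in>S. W n i p qh * c i) \<le> (\<Sum>i\<in>S. W n i p q * c i)"
  shows "(\<Sum>i\<in>S. W n i p qh * c i * (real n * qh - real i)) = 0"
proof -
  let ?F = "\<lambda>q. \<Sum>i\<in>S. W n i p q * c i"
  let ?D = "\<Sum>i\<in>S. W n i p qh * (real n * qh - real i) / (qh * (1 - qh)) * c i"
  have "(?F has_field_derivative ?D) (at qh)"
    using assms(1-3) by (intro DERIV_sum DERIV_cmult_right has_field_derivative_W) auto
  moreover have "0 < min qh (1 - qh)"
    using assms(2,3) by simp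
  moreover have "\<forall>y. \<bar>qh - y\<bar> < min qh (1 - qh) \<longrightarrow> ?F qh \<le> ?F y"
    using assms(4) by (simp add: abs_less_iff)
  ultimately have "?D = 0"
    by (rule DERIV_local_min)
  moreover have "?D = (\<Sum>i\<in>S. W n i p qh * c i * (real n * qh - real i)) / (qh * (1 - qh))"
    by (simp add: sum_divide_distrib mult_ac)
  ultimately show ?thesis
    using assms(2,3) by simp
qed

lemma interior_min_W_sum_eq:
  assumes "\<And>i. i \<in> S \<Longrightarrow> i \<le> n" and "n > 0" and "0 < p" "p < 1"
    and "\<And>i. i \<in> S \<Longrightarrow> 0 \<le> c i" and "(\<Sum>i\<in>S. c i) > 0"
    and "0 < qh" "qh < 1"
    and "\<And>q. 0 < q \<Longrightarrow> q < 1 \<Longrightarrow> (\<Sum>i\<in>S. W n i p qh * c i) \<le> (\<Sum>i\<in>S. W n i p q * c i)"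
  shows "qh = (1 / real n) * ((\<Sum>i\<in>S. real i * W n i p qh * c i) / (\<Sum>i\<in>S. W n i p qh * c i))"
proof -
  have "finite S"
    using assms(1) finite_subset[of S "{..n}"] by auto
  then have pos: "(\<Sum>i\<in>S. W n i p qh * c i) > 0"
    using assms by (intro sum_W_pos) auto
  have "(\<Sum>i\<in>S. W n i p qh * c i * (real n * qh - real i)) = 0"
    using assms by (intro W_sum_stationary) auto
  then have "real n * qh * (\<Sum>i\<in>S. W n i p qh * c i) = (\<Sum>i\<in>S. real i * W n i p qh * c i)"
    by (simp add: right_diff_distrib sum_subtractf sum_distrib_left mult_ac)
  then show ?thesis
    using pos assms(2) by (simp add: field_simps)
qed

theorem theorem1:
  fixes n N t :: nat and p :: real and err :: "bool list \<Rightarrow> bool"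
  assumes "n \<ge> 1" and "N \<ge> 1"
    and "0 < p" and "p < 1"
    and "t < n"
    and "\<And>z. z \<in> patterns n \<Longrightarrow> wt z \<le> t \<Longrightarrow> \<not> err z"
    and "(\<Sum>i=t+1..n. Pe_i n err p i) > 0"
    and "0 < qh" and "qh < 1"
    and "\<And>q. 0 < q \<Longrightarrow> q < 1 \<Longrightarrow> V n N err p qh \<le> V n N err p q"
  shows "qh = (1 / real n) *
           ((\<Sum>i=t+1..n. real i * W n i p qh * Pe_i n err p i) /
            (\<Sum>i=t+1..n. W n i p qh * Pe_i n err p i))"
proof (rule interior_min_W_sum_eq)
  fix q :: real
  assume q: "0 < q" "q < 1"
  let ?F = "\<lambda>q. \<Sum>i=t+1..n. W n i p q * Pe_i n err p i"
  have V_eq: "V n N err p x = (1 / real N) * (?F x - (Perr n err p)\<^sup>2)" if "0 < x" "x < 1" for x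
    using that assms(6) by (rule V_eq_sum_W_Pe_i)
  have "(1 / real N) * (?F qh - (Perr n err p)\<^sup>2) \<le> (1 / real N) * (?F q - (Perr n err p)\<^sup>2)"
    using assms(10)[OF q] V_eq[OF q] V_eq[OF assms(8,9)] by simp
  then show "?F qh \<le> ?F q"
    using assms(2) by (simp add: divide_le_cancel)
qed (use assms Pe_i_nonneg in auto)

end
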